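(* The alternating-minimization initialization algorithm described in the context generates objective values for the representation-aware $k$-means clustering problem that are monotonically non-increasing over the outer iterations $l \geq 2$, and it terminates after a finite number of iterations.
   Context: Data $\mathcal{D}=\{x^t\in\mathbb{R}^D\}_{t=1}^N$ are to be partitioned into $K$ clusters $C_1,\dots,C_K$ with binary assignment variables $z_{tk}$ (each point assigned to exactly one cluster, $\sum_k z_{tk}=1$) and cluster-usage binaries $u_k$, subject to cardinality constraints $N_{\min}u_k\le\sum_t z_{tk}\le N_{\max}u_k$. For each pair of clusters $i<j$, an interpretable separating hyperplane $(w^{ij},b^{ij})$ is found by the integer program: minimize $\sum_{t\in C_i\cup C_j}\xi_t$ subject to $(w^{ij})^Tx^t+b^{ij}\ge-\xi_t$ for $x^t\in C_i$, $(w^{ij})^Tx^t+b^{ij}+\epsilon\le\xi_t$ for $x^t\in C_j$, $\xi_t\ge 0$, with $w^{ij}=w^{ij}_+-w^{ij}_-$ integer, $w^{ij}_\pm\in\mathbb{Z}^D_{\ge0}$, $\sum_d (w^{ij}_{d,+}+w^{ij}_{d,-})\ge1$, binaries $y^{ij}_{d,\pm}$ with $y^{ij}_{d,+}+y^{ij}_{d,-}\le1$, $\sum_d(y^{ij}_{d,+}+y^{ij}_{d,-})\le\beta$, and $0\le w^{ij}_{d,\pm}\le M y^{ij}_{d,\pm}$ (here $M>1$ is the maximum integer coefficient, $\beta$ a sparsity bound, $\epsilon>0$ a fixed separation constant). Given hyperplanes, representation errors for every point are $(\xi^{ij}_+)_t$ (error if $t$ is assigned to cluster $i$) and $(\xi^{ij}_-)_t$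 (error if assigned to cluster $j$). The representation-aware $k$-means problem is: minimize $\sum_{k=1}^K\sum_{t}z_{tk}\|x^t-c_k\|^2+\lambda\sum_t\sum_{i=1}^{K-1}\sum_{j=i+1}^K\big(z_{ti}(\xi^{ij}_+)_t+z_{tj}(\xi^{ij}_-)_t\big)$ over $z$, centers $c_k$, and $u_k$, subject to the assignment and cardinality constraints, with $\lambda\ge0$. The initialization algorithm: set all $\xi=0$; initialize $z,c_k$ by standard $k$-means; then for outer iterations $l=1,2,\dots$: (a) repeatedly fix $c_k$ and solve the representation-aware $k$-means problem for $z$, then set $c_k=\frac{1}{N_k}\sum_t z_{tk}x^t$ with $N_k=\sum_t z_{tk}$, until convergence; (b) set $C_i=\{x^t:z_{ti}=1\}$ and for every pair $i<j$ solve the separating-hyperplane IP for $(w^{ij},b^{ij})$ and update $(\xi^{ij}_+)_t=\max(-(w^{ij})^Tx^t+b^{ij},0)$ and $(\xi^{ij}_-)_t=\max((w^{ij})^Tx^t+b^{ij}+\epsilon,0)$ for all $t$; the algorithm stops when the objective value no longer changes. *)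

theory Defs
  imports "HOL-Analysis.Analysis"
begin

text \<open>Data: points x t (for t < N) in real^'d, i.e. R^D with D = CARD('d).
  Clusters are indexed by k < K (0-based; the paper's 1..K).
  Assignments z t k are reals constrained to {0,1}; representation errors
  are stored as xi i j t (pair of clusters i < j, point t).\<close>

type_synonym assign = "nat \<Rightarrow> nat \<Rightarrow> real"
type_synonym errs = "nat \<Rightarrow> nat \<Rightarrow> nat \<Rightarrow> real"

definition feasible_assign :: "nat \<Rightarrow> nat \<Rightarrow> nat \<Rightarrow> nat \<Rightarrow> assign \<Rightarrow> bool" where
  "feasible_assign N K Nmin Nmax z \<longleftrightarrow>
     (\<forall>t<N. \<forall>k<K. z t k \<in> {0, 1}) \<and>
     (\<forall>t<N. (\<Sum>k<K. z t k) = 1) \<and>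
     (\<exists>u :: nat \<Rightarrow> real. \<forall>k<K. u k \<in> {0, 1} \<and>
          real Nmin * u k \<le> (\<Sum>t<N. z t k) \<and> (\<Sum>t<N. z t k) \<le> real Nmax * u k)"

definition ra_obj :: "(nat \<Rightarrow> real^'d) \<Rightarrow> nat \<Rightarrow> nat \<Rightarrow> real \<Rightarrow> assign \<Rightarrow> (nat \<Rightarrow> real^'d)
                      \<Rightarrow> errs \<Rightarrow> errs \<Rightarrow> real" where
  "ra_obj x N K lam z c xip xim =
     (\<Sum>k<K. \<Sum>t<N. z t k * (norm (x t - c k))\<^sup>2) +
     lam * (\<Sum>t<N. \<Sum>i<K - 1. \<Sum>j\<in>{i<..<K}. z t i * xip i j t + z t j * xim i j t)"

definition centroids :: "(nat \<Rightarrow> real^'d) \<Rightarrow> nat \<Rightarrow> assign \<Rightarrow> nat \<Rightarrow> real^'d" where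
  "centroids x N z k = (1 / (\<Sum>t<N. z t k)) *\<^sub>R (\<Sum>t<N. z t k *\<^sub>R x t)"

definition cluster :: "nat \<Rightarrow> assign \<Rightarrow> nat \<Rightarrow> nat set" where
  "cluster N z k = {t. t < N \<and> z t k = 1}"

text \<open>Feasible points of the separating-hyperplane integer program for clusters Ci, Cj:
  w = wp - wm with wp, wm nonnegative integer vectors, binaries yp, ym, offset b,
  slacks xi.\<close>
definition hp_feasible :: "(nat \<Rightarrow> real^'d) \<Rightarrow> nat \<Rightarrow> nat \<Rightarrow> real \<Rightarrow> nat set \<Rightarrow> nat set
     \<Rightarrow> real^'d \<Rightarrow> real^'d \<Rightarrow> real^'d \<Rightarrow> real^'d \<Rightarrow> real \<Rightarrow> (nat \<Rightarrow> real) \<Rightarrow> bool" where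
  "hp_feasible x M \<beta> \<epsilon> Ci Cj wp wm yp ym b \<xi> \<longleftrightarrow>
     (\<forall>t\<in>Ci. (wp - wm) \<bullet> x t + b \<ge> - \<xi> t) \<and>
     (\<forall>t\<in>Cj. (wp - wm) \<bullet> x t + b + \<epsilon> \<le> \<xi> t) \<and>
     (\<forall>t\<in>Ci \<union> Cj. \<xi> t \<ge> 0) \<and>
     (\<forall>d. wp $ d \<in> \<nat> \<and> wm $ d \<in> \<nat>) \<and>
     (\<Sum>d\<in>UNIV. wp $ d + wm $ d) \<ge> 1 \<and>
     (\<forall>d. yp $ d \<in> {0, 1} \<and> ym $ d \<in> {0, 1}) \<and>
     (\<forall>d. yp $ d + ym $ d \<le> 1) \<and>
     (\<Sum>d\<in>UNIV. yp $ d + ym $ d) \<le> real \<beta> \<and>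
     (\<forall>d. 0 \<le> wp $ d \<and> wp $ d \<le> real M * yp $ d \<and>
          0 \<le> wm $ d \<and> wm $ d \<le> real M * ym $ d)"

definition hp_optimal :: "(nat \<Rightarrow> real^'d) \<Rightarrow> nat \<Rightarrow> nat \<Rightarrow> real \<Rightarrow> nat set \<Rightarrow> nat set
     \<Rightarrow> real^'d \<Rightarrow> real \<Rightarrow> bool" where
  "hp_optimal x M \<beta> \<epsilon> Ci Cj w b \<longleftrightarrow>
     (\<exists>wp wm yp ym \<xi>. w = wp - wm \<and> hp_feasible x M \<beta> \<epsilon> Ci Cj wp wm yp ym b \<xi> \<and>
        (\<forall>wp' wm' yp' ym' b' \<xi>'. hp_feasible x M \<beta> \<epsilon> Ci Cj wp' wm' yp' ym' b' \<xi>' \<longrightarrow>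
             (\<Sum>t\<in>Ci \<union> Cj. \<xi> t) \<le> (\<Sum>t\<in>Ci \<union> Cj. \<xi>' t)))"

definition hp_step :: "(nat \<Rightarrow> real^'d) \<Rightarrow> nat \<Rightarrow> nat \<Rightarrow> nat \<Rightarrow> nat \<Rightarrow> real \<Rightarrow> assign
     \<Rightarrow> errs \<Rightarrow> errs \<Rightarrow> bool" where
  "hp_step x N K M \<beta> \<epsilon> z xip xim \<longleftrightarrow>
     (\<forall>i j. i < j \<and> j < K \<longrightarrow>
        (\<exists>w b. hp_optimal x M \<beta> \<epsilon> (cluster N z i) (cluster N z j) w b \<and>
           (\<forall>t<N. xip i j t = max (- (w \<bullet> x t + b)) 0 \<and>
                  xim i j t = max (w \<bullet> x t + b + \<epsilon>) 0)))"

definition inner_step :: "(nat \<Rightarrow> real^'d) \<Rightarrow> nat \<Rightarrow> nat \<Rightarrow> nat \<Rightarrow> nat \<Rightarrow> real \<Rightarrow> errs \<Rightarrow> errs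
     \<Rightarrow> assign \<Rightarrow> (nat \<Rightarrow> real^'d) \<Rightarrow> assign \<Rightarrow> (nat \<Rightarrow> real^'d) \<Rightarrow> bool" where
  "inner_step x N K Nmin Nmax lam xip xim z c z' c' \<longleftrightarrow>
     feasible_assign N K Nmin Nmax z' \<and>
     (\<forall>z''. feasible_assign N K Nmin Nmax z'' \<longrightarrow>
        ra_obj x N K lam z' c xip xim \<le> ra_obj x N K lam z'' c xip xim) \<and>
     c' = centroids x N z'"

definition inner_loop :: "(nat \<Rightarrow> real^'d) \<Rightarrow> nat \<Rightarrow> nat \<Rightarrow> nat \<Rightarrow> nat \<Rightarrow> real \<Rightarrow> errs \<Rightarrow> errs
     \<Rightarrow> assign \<Rightarrow> (nat \<Rightarrow> real^'d) \<Rightarrow> assign \<Rightarrow> (nat \<Rightarrow> real^'d) \<Rightarrow> bool" where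
  "inner_loop x N K Nmin Nmax lam xip xim z0 c0 z1 c1 \<longleftrightarrow>
     (\<exists>n zs cs. n \<ge> 1 \<and> zs 0 = z0 \<and> cs 0 = c0 \<and> zs n = z1 \<and> cs n = c1 \<and>
        (\<forall>m<n. inner_step x N K Nmin Nmax lam xip xim (zs m) (cs m) (zs (Suc m)) (cs (Suc m))) \<and>
        (\<forall>m. Suc m < n \<longrightarrow> ra_obj x N K lam (zs (Suc m)) (cs (Suc m)) xip xim
                              \<noteq> ra_obj x N K lam (zs m) (cs m) xip xim) \<and>
        ra_obj x N K lam (zs n) (cs n) xip xim = ra_obj x N K lam (zs (n - 1)) (cs (n - 1)) xip xim)"

text \<open>A run of the initialization algorithm through outer iteration L:
  Z 0, C 0 come from (standard) k-means, all errors start at 0, and outer iteration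
  l performs (a) with the errors of iteration l - 1 and then (b).\<close>
definition outer_run_upto :: "(nat \<Rightarrow> real^'d) \<Rightarrow> nat \<Rightarrow> nat \<Rightarrow> nat \<Rightarrow> nat \<Rightarrow> nat \<Rightarrow> nat
     \<Rightarrow> real \<Rightarrow> real \<Rightarrow> nat \<Rightarrow> (nat \<Rightarrow> assign) \<Rightarrow> (nat \<Rightarrow> nat \<Rightarrow> real^'d)
     \<Rightarrow> (nat \<Rightarrow> errs) \<Rightarrow> (nat \<Rightarrow> errs) \<Rightarrow> bool" where
  "outer_run_upto x N K Nmin Nmax M \<beta> \<epsilon> lam L Z C XP XM \<longleftrightarrow>
     (\<forall>t<N. \<forall>k<K. Z 0 t k \<in> {0, 1}) \<and> (\<forall>t<N. (\<Sum>k<K. Z 0 t k) = 1) \<and>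
     C 0 = centroids x N (Z 0) \<and>
     XP 0 = (\<lambda>i j t. 0) \<and> XM 0 = (\<lambda>i j t. 0) \<and>
     (\<forall>l. 1 \<le> l \<and> l \<le> L \<longrightarrow>
        inner_loop x N K Nmin Nmax lam (XP (l - 1)) (XM (l - 1)) (Z (l - 1)) (C (l - 1)) (Z l) (C l) \<and>
        hp_step x N K M \<beta> \<epsilon> (Z l) (XP l) (XM l))"

definition outer_obj :: "(nat \<Rightarrow> real^'d) \<Rightarrow> nat \<Rightarrow> nat \<Rightarrow> real \<Rightarrow> (nat \<Rightarrow> assign)
     \<Rightarrow> (nat \<Rightarrow> nat \<Rightarrow> real^'d) \<Rightarrow> (nat \<Rightarrow> errs) \<Rightarrow> (nat \<Rightarrow> errs) \<Rightarrow> nat \<Rightarrow> real" where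
  "outer_obj x N K lam Z C XP XM l = ra_obj x N K lam (Z l) (C l) (XP (l - 1)) (XM (l - 1))"

end

theory Submission
  imports Defs
begin

text \<open>Within one outer iteration the objective cannot increase: the assignment step is
  an exact minimisation, and recomputing the centres as means minimises the k-means part.
  Across outer iterations, the errors of step (b) come from optimal hyperplanes for the
  current clusters, so they are no larger than the errors of the previous iteration's
  hyperplanes, which remain feasible for any pair of disjoint clusters.
  For termination, every value involved is determined by the binary assignment on the
  finitely many pairs (t, k); a non-increasing sequence of such values takes only
  finitely many values and is therefore eventually constant.\<close>

lemma weighted_sum_sq_dist_mean_le:
  fixes y :: "'i \<Rightarrow> 'a::real_inner" and w :: "'i \<Rightarrow> real"
  assumes "finite I" and w_nonneg: "\<And>i. i \<in> I \<Longrightarrow> 0 \<le> w i"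
  defines "\<mu> \<equiv> (1 / (\<Sum>i\<in>I. w i)) *\<^sub>R (\<Sum>i\<in>I. w i *\<^sub>R y i)"
  shows "(\<Sum>i\<in>I. w i * (norm (y i - \<mu>))\<^sup>2) \<le> (\<Sum>i\<in>I. w i * (norm (y i - c))\<^sup>2)"
proof (cases "(\<Sum>i\<in>I. w i) = 0")
  case True
  then have "\<forall>i\<in>I. w i = 0"
    using assms sum_nonneg_eq_0_iff by blast
  then show ?thesis by simp
next
  case False
  define W where "W = (\<Sum>i\<in>I. w i)"
  have "W *\<^sub>R \<mu> = (\<Sum>i\<in>I. w i *\<^sub>R y i)"
    using False by (simp add: \<mu>_def W_def)
  then have balanced: "(\<Sum>i\<in>I. w i *\<^sub>R (y i - \<mu>)) = 0"
    by (simp add: scaleR_diff_right sum_subtractf scaleR_sum_left W_def)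
  have cross: "(\<Sum>i\<in>I. w i * ((y i - \<mu>) \<bullet> (\<mu> - c))) = 0"
    using arg_cong[OF balanced, of "\<lambda>v. v \<bullet> (\<mu> - c)"] by (simp add: inner_sum_left)
  have expand: "(norm (y i - c))\<^sup>2 =
      (norm (y i - \<mu>))\<^sup>2 + 2 * ((y i - \<mu>) \<bullet> (\<mu> - c)) + (norm (\<mu> - c))\<^sup>2" for i
    using dot_norm[of "y i - \<mu>" "\<mu> - c"] by simp
  have "(\<Sum>i\<in>I. w i * (norm (y i - c))\<^sup>2)
      = (\<Sum>i\<in>I. w i * (norm (y i - \<mu>))\<^sup>2 + 2 * (w i * ((y i - \<mu>) \<bullet> (\<mu> - c)))
          + w i * (norm (\<mu> - c))\<^sup>2)"
    by (simp only: expand distrib_left mult.left_commute)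
  also have "\<dots> = (\<Sum>i\<in>I. w i * (norm (y i - \<mu>))\<^sup>2) + W * (norm (\<mu> - c))\<^sup>2"
    using cross by (simp add: sum.distrib sum_distrib_left[symmetric] sum_distrib_right[symmetric] W_def)
  finally show ?thesis
    using sum_nonneg[of I w] w_nonneg unfolding W_def by simp
qed

definition kmeans_cost :: "(nat \<Rightarrow> real^'d) \<Rightarrow> nat \<Rightarrow> nat \<Rightarrow> assign \<Rightarrow> (nat \<Rightarrow> real^'d) \<Rightarrow> real"
  where "kmeans_cost x N K z c = (\<Sum>k<K. \<Sum>t<N. z t k * (norm (x t - c k))\<^sup>2)"

definition separation_error :: "nat \<Rightarrow> nat \<Rightarrow> assign \<Rightarrow> errs \<Rightarrow> errs \<Rightarrow> real"
  where "separation_error N K z xip xim =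
    (\<Sum>t<N. \<Sum>i<K - 1. \<Sum>j\<in>{i<..<K}. z t i * xip i j t + z t j * xim i j t)"

lemma ra_obj_eq_kmeans_cost_plus_separation_error:
  "ra_obj x N K lam z c xip xim = kmeans_cost x N K z c + lam * separation_error N K z xip xim"
  by (simp add: ra_obj_def kmeans_cost_def separation_error_def)

lemma kmeans_cost_centroids_le:
  assumes "\<And>t k. t < N \<Longrightarrow> k < K \<Longrightarrow> 0 \<le> z t k"
  shows "kmeans_cost x N K z (centroids x N z) \<le> kmeans_cost x N K z c"
  unfolding kmeans_cost_def centroids_def
  using assms by (intro sum_mono weighted_sum_sq_dist_mean_le) auto

lemma feasible_assignD:
  assumes "feasible_assign N K Nmin Nmax z"
  shows "\<forall>t<N. \<forall>k<K. z t k \<in> {0, 1}" and "\<forall>t<N. (\<Sum>k<K. z t k) = 1"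
  using assms unfolding feasible_assign_def by auto

lemma inner_step_ra_obj_le:
  assumes "feasible_assign N K Nmin Nmax z"
    and "inner_step x N K Nmin Nmax lam xip xim z c z' c'"
  shows "ra_obj x N K lam z' c' xip xim \<le> ra_obj x N K lam z c xip xim"
proof -
  have feasible': "feasible_assign N K Nmin Nmax z'"
    and assign_opt: "ra_obj x N K lam z' c xip xim \<le> ra_obj x N K lam z c xip xim"
    and c': "c' = centroids x N z'"
    using assms unfolding inner_step_def by auto
  have "0 \<le> z' t k" if "t < N" "k < K" for t k
    using feasible_assignD(1)[OF feasible'] that by fastforce
  then have "kmeans_cost x N K z' c' \<le> kmeans_cost x N K z' c"
    unfolding c' by (rule kmeans_cost_centroids_le)
  then have "ra_obj x N K lam z' c' xip xim \<le> ra_obj x N K lam z' c xip xim"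
    by (simp add: ra_obj_eq_kmeans_cost_plus_separation_error)
  with assign_opt show ?thesis
    by linarith
qed

lemma inner_loop_result:
  assumes "inner_loop x N K Nmin Nmax lam xip xim z0 c0 z1 c1"
  shows "feasible_assign N K Nmin Nmax z1" and "c1 = centroids x N z1"
proof -
  obtain n zs cs where "n \<ge> 1" "zs n = z1" "cs n = c1"
    and steps: "\<forall>m<n. inner_step x N K Nmin Nmax lam xip xim (zs m) (cs m) (zs (Suc m)) (cs (Suc m))"
    using assms unfolding inner_loop_def by blast
  from \<open>n \<ge> 1\<close> obtain m where "n = Suc m"
    using not0_implies_Suc by force
  with steps have "inner_step x N K Nmin Nmax lam xip xim (zs m) (cs m) (zs n) (cs n)"
    by simp
  then show "feasible_assign N K Nmin Nmax z1" "c1 = centroids x N z1"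
    using \<open>zs n = z1\<close> \<open>cs n = c1\<close> unfolding inner_step_def by simp_all
qed

lemma inner_loop_ra_obj_le:
  assumes "feasible_assign N K Nmin Nmax z0"
    and "inner_loop x N K Nmin Nmax lam xip xim z0 c0 z1 c1"
  shows "ra_obj x N K lam z1 c1 xip xim \<le> ra_obj x N K lam z0 c0 xip xim"
proof -
  obtain n zs cs where start: "zs 0 = z0" "cs 0 = c0" and stop: "zs n = z1" "cs n = c1"
    and steps: "\<And>m. m < n \<Longrightarrow>
      inner_step x N K Nmin Nmax lam xip xim (zs m) (cs m) (zs (Suc m)) (cs (Suc m))"
    using assms(2) unfolding inner_loop_def by blast
  have feasible: "feasible_assign N K Nmin Nmax (zs m)" if "m \<le> n" for m
  proof (cases m)
    case 0
    then show ?thesis using assms(1) start by simp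
  next
    case (Suc m')
    then show ?thesis using steps[of m'] that unfolding inner_step_def by simp
  qed
  have "ra_obj x N K lam (zs (Suc m)) (cs (Suc m)) xip xim \<le> ra_obj x N K lam (zs m) (cs m) xip xim"
    if "m < n" for m
    using inner_step_ra_obj_le[OF feasible steps] that by simp
  then have "ra_obj x N K lam (zs n) (cs n) xip xim \<le> ra_obj x N K lam (zs 0) (cs 0) xip xim"
    by (rule lift_Suc_antimono_le_ivl[of "{..<n}"]) auto
  then show ?thesis
    unfolding start stop .
qed

definition hinge_error :: "(nat \<Rightarrow> real^'d) \<Rightarrow> real \<Rightarrow> nat set \<Rightarrow> nat set \<Rightarrow> real^'d \<Rightarrow> real \<Rightarrow> real"
  where "hinge_error x \<epsilon> Ci Cj w b =
    (\<Sum>t\<in>Ci. max (- (w \<bullet> x t + b)) 0) + (\<Sum>t\<in>Cj. max (w \<bullet> x t + b + \<epsilon>) 0)"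

text \<open>Apart from the slack constraints, the integer program constrains (w, b)
  independently of the clusters, so a hyperplane feasible for one pair of clusters is
  feasible for any disjoint pair, with the hinge errors as slacks.\<close>

lemma hp_optimal_hinge_error_le:
  fixes x :: "nat \<Rightarrow> real^'d"
  assumes "Ci \<inter> Cj = {}" "finite Ci" "finite Cj"
    and "hp_optimal x M \<beta> \<epsilon> Ci Cj w b"
    and "hp_feasible x M \<beta> \<epsilon> Ci' Cj' wp' wm' yp' ym' b' \<xi>'"
  shows "hinge_error x \<epsilon> Ci Cj w b \<le> hinge_error x \<epsilon> Ci Cj (wp' - wm') b'"
proof -
  obtain wp wm yp ym \<xi> where w: "w = wp - wm"
    and feasible: "hp_feasible x M \<beta> \<epsilon> Ci Cj wp wm yp ym b \<xi>"
    and optimal: "\<And>wp' wm' yp' ym' b' \<xi>'. hp_feasible x M \<beta> \<epsilon> Ci Cj wp' wm' yp' ym' b' \<xi>' \<Longrightarrow>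
      (\<Sum>t\<in>Ci \<union> Cj. \<xi> t) \<le> (\<Sum>t\<in>Ci \<union> Cj. \<xi>' t)"
    using assms(4) unfolding hp_optimal_def by blast
  define hinge where "hinge t = (if t \<in> Ci then max (- ((wp' - wm') \<bullet> x t + b')) 0
    else max ((wp' - wm') \<bullet> x t + b' + \<epsilon>) 0)" for t
  have "hp_feasible x M \<beta> \<epsilon> Ci Cj wp' wm' yp' ym' b' hinge"
    using assms(1,5) unfolding hp_feasible_def hinge_def by auto
  then have "(\<Sum>t\<in>Ci \<union> Cj. \<xi> t) \<le> (\<Sum>t\<in>Ci \<union> Cj. hinge t)"
    by (rule optimal)
  moreover have "(\<Sum>t\<in>Ci \<union> Cj. hinge t) = hinge_error x \<epsilon> Ci Cj (wp' - wm') b'"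
    using assms(1-3) unfolding hinge_error_def hinge_def
    by (auto simp: sum.union_disjoint intro!: sum.cong)
  moreover have "hinge_error x \<epsilon> Ci Cj w b \<le> (\<Sum>t\<in>Ci \<union> Cj. \<xi> t)"
    using feasible assms(1-3) unfolding hinge_error_def hp_feasible_def w
    by (auto simp: sum.union_disjoint intro!: add_mono sum_mono)
  ultimately show ?thesis by linarith
qed

lemma sum_binary_weights_eq_sum_cluster:
  assumes "\<forall>t<N. z t k \<in> {0, 1}"
  shows "(\<Sum>t<N. z t k * a t) = (\<Sum>t\<in>cluster N z k. a t)"
proof -
  have "(\<Sum>t\<in>cluster N z k. a t) = (\<Sum>t<N. if z t k = 1 then a t else 0)"
    unfolding cluster_def by (simp add: sum.inter_filter[symmetric] lessThan_def conj_commute)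
  also have "\<dots> = (\<Sum>t<N. z t k * a t)"
    using assms by (intro sum.cong) auto
  finally show ?thesis by simp
qed

lemma separation_error_eq_sum_clusters:
  assumes "\<forall>t<N. \<forall>k<K. z t k \<in> {0, 1}"
  shows "separation_error N K z xip xim = (\<Sum>i<K - 1. \<Sum>j\<in>{i<..<K}.
    (\<Sum>t\<in>cluster N z i. xip i j t) + (\<Sum>t\<in>cluster N z j. xim i j t))"
proof -
  have "separation_error N K z xip xim =
      (\<Sum>i<K - 1. \<Sum>j\<in>{i<..<K}. (\<Sum>t<N. z t i * xip i j t) + (\<Sum>t<N. z t j * xim i j t))"
    unfolding separation_error_def by (simp add: sum.swap[of _ "{..<N}"] sum.distrib)
  also have "\<dots> = (\<Sum>i<K - 1. \<Sum>j\<in>{i<..<K}.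
      (\<Sum>t\<in>cluster N z i. xip i j t) + (\<Sum>t\<in>cluster N z j. xim i j t))"
  proof (intro sum.cong refl)
    fix i j
    assume "i \<in> {..<K - 1}" "j \<in> {i<..<K}"
    then have "\<forall>t<N. z t i \<in> {0, 1}" "\<forall>t<N. z t j \<in> {0, 1}"
      using assms by auto
    then show "(\<Sum>t<N. z t i * xip i j t) + (\<Sum>t<N. z t j * xim i j t)
        = (\<Sum>t\<in>cluster N z i. xip i j t) + (\<Sum>t\<in>cluster N z j. xim i j t)"
      by (simp only: sum_binary_weights_eq_sum_cluster)
  qed
  finally show ?thesis .
qed

lemma clusters_disjoint:
  assumes "\<forall>t<N. \<forall>k<K. z t k \<in> {0, 1}" and "\<forall>t<N. (\<Sum>k<K. z t k) = 1"
    and "i < K" "j < K" "i \<noteq> j"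
  shows "cluster N z i \<inter> cluster N z j = {}"
proof (rule ccontr)
  assume "cluster N z i \<inter> cluster N z j \<noteq> {}"
  then obtain t where "t < N" "z t i = 1" "z t j = 1"
    unfolding cluster_def by auto
  then have "(\<Sum>k\<in>{i, j}. z t k) = 2"
    using \<open>i \<noteq> j\<close> by simp
  moreover have "(\<Sum>k\<in>{i, j}. z t k) \<le> (\<Sum>k<K. z t k)"
    using assms(1,3,4) \<open>t < N\<close> by (intro sum_mono2) force+
  ultimately show False
    using assms(2) \<open>t < N\<close> by simp
qed

lemma hp_step_separation_error_le:
  fixes x :: "nat \<Rightarrow> real^'d"
  assumes "feasible_assign N K Nmin Nmax z"
    and "hp_step x N K M \<beta> \<epsilon> z xip xim"
    and "hp_step x N K M \<beta> \<epsilon> z' xip' xim'"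
  shows "separation_error N K z xip xim \<le> separation_error N K z xip' xim'"
proof -
  note binary = feasible_assignD(1)[OF assms(1)] and one_hot = feasible_assignD(2)[OF assms(1)]
  have finite: "finite (cluster N z k)" for k
    unfolding cluster_def by simp
  show ?thesis
    unfolding separation_error_eq_sum_clusters[OF binary]
  proof (intro sum_mono)
    fix i j
    assume "i \<in> {..<K - 1}" "j \<in> {i<..<K}"
    then have ij: "i < j" "j < K" by auto
    obtain w b where optimal: "hp_optimal x M \<beta> \<epsilon> (cluster N z i) (cluster N z j) w b"
      and errs: "\<forall>t<N. xip i j t = max (- (w \<bullet> x t + b)) 0 \<and>
        xim i j t = max (w \<bullet> x t + b + \<epsilon>) 0"
      using assms(2) ij unfolding hp_step_def by blast
    obtain w' b' where optimal': "hp_optimal x M \<beta> \<epsilon> (cluster N z' i) (cluster N z' j) w' b'"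
      and errs': "\<forall>t<N. xip' i j t = max (- (w' \<bullet> x t + b')) 0 \<and>
        xim' i j t = max (w' \<bullet> x t + b' + \<epsilon>) 0"
      using assms(3) ij unfolding hp_step_def by blast
    from optimal' obtain wp' wm' yp' ym' \<xi>' where w': "w' = wp' - wm'"
      and feasible': "hp_feasible x M \<beta> \<epsilon> (cluster N z' i) (cluster N z' j) wp' wm' yp' ym' b' \<xi>'"
      unfolding hp_optimal_def by blast
    have "cluster N z i \<inter> cluster N z j = {}"
      using clusters_disjoint[OF binary one_hot] ij by simp
    from hp_optimal_hinge_error_le[OF this finite finite optimal feasible']
    have "hinge_error x \<epsilon> (cluster N z i) (cluster N z j) w b
        \<le> hinge_error x \<epsilon> (cluster N z i) (cluster N z j) w' b'"
      unfolding w' .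
    moreover have "(\<Sum>t\<in>cluster N z i. xip i j t) + (\<Sum>t\<in>cluster N z j. xim i j t)
        = hinge_error x \<epsilon> (cluster N z i) (cluster N z j) w b"
      using errs unfolding hinge_error_def cluster_def by simp
    moreover have "(\<Sum>t\<in>cluster N z i. xip' i j t) + (\<Sum>t\<in>cluster N z j. xim' i j t)
        = hinge_error x \<epsilon> (cluster N z i) (cluster N z j) w' b'"
      using errs' unfolding hinge_error_def cluster_def by simp
    ultimately show "(\<Sum>t\<in>cluster N z i. xip i j t) + (\<Sum>t\<in>cluster N z j. xim i j t)
        \<le> (\<Sum>t\<in>cluster N z i. xip' i j t) + (\<Sum>t\<in>cluster N z j. xim' i j t)"
      by simp
  qed
qed

definition assign_support :: "nat \<Rightarrow> nat \<Rightarrow> assign \<Rightarrow> (nat \<times> nat) set"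
  where "assign_support N K z = {(t, k). t < N \<and> k < K \<and> z t k = 1}"

lemma finite_image_assign_support: "finite (assign_support N K ` Z)"
proof (rule finite_subset)
  show "assign_support N K ` Z \<subseteq> Pow ({..<N} \<times> {..<K})"
    unfolding assign_support_def by auto
qed simp

lemma binary_assign_eq_if_support_eq:
  assumes "\<forall>t<N. \<forall>k<K. z t k \<in> {0, 1}" and "\<forall>t<N. \<forall>k<K. z' t k \<in> {0, 1}"
    and "assign_support N K z = assign_support N K z'"
  shows "\<forall>t<N. \<forall>k<K. z t k = z' t k"
proof (intro allI impI)
  fix t k
  assume tk: "t < N" "k < K"
  have "(t, k) \<in> assign_support N K z \<longleftrightarrow> (t, k) \<in> assign_support N K z'"
    using assms(3) by simp
  then have "z t k = 1 \<longleftrightarrow> z' t k = 1"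
    using tk unfolding assign_support_def by simp
  moreover have "z t k \<in> {0, 1}" "z' t k \<in> {0, 1}"
    using assms(1,2) tk by simp_all
  ultimately show "z t k = z' t k"
    by auto
qed

lemma centroids_cong:
  assumes "\<forall>t<N. z t k = z' t k"
  shows "centroids x N z k = centroids x N z' k"
proof -
  have "(\<Sum>t<N. z t k) = (\<Sum>t<N. z' t k)" "(\<Sum>t<N. z t k *\<^sub>R x t) = (\<Sum>t<N. z' t k *\<^sub>R x t)"
    using assms by (auto intro!: sum.cong)
  then show ?thesis
    unfolding centroids_def by simp
qed

lemma kmeans_cost_centroids_cong:
  assumes "\<forall>t<N. \<forall>k<K. z t k = z' t k"
  shows "kmeans_cost x N K z (centroids x N z) = kmeans_cost x N K z' (centroids x N z')"
  unfolding kmeans_cost_def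
proof (intro sum.cong refl)
  fix k t
  assume "k \<in> {..<K}" "t \<in> {..<N}"
  moreover from this have "centroids x N z k = centroids x N z' k"
    using assms by (intro centroids_cong) simp
  ultimately show "z t k * (norm (x t - centroids x N z k))\<^sup>2 = z' t k * (norm (x t - centroids x N z' k))\<^sup>2"
    using assms by simp
qed

lemma separation_error_cong:
  assumes "\<forall>t<N. \<forall>k<K. z t k = z' t k"
  shows "separation_error N K z xip xim = separation_error N K z' xip xim"
  unfolding separation_error_def using assms by (intro sum.cong refl) auto

lemma ra_obj_centroids_eq_if_support_eq:
  assumes feasible: "feasible_assign N K Nmin Nmax z" and feasible': "feasible_assign N K Nmin Nmax z'"
    and support: "assign_support N K z = assign_support N K z'"
  shows "ra_obj x N K lam z (centroids x N z) xip xim = ra_obj x N K lam z' (centroids x N z') xip xim"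
proof -
  have same: "\<forall>t<N. \<forall>k<K. z t k = z' t k"
    using binary_assign_eq_if_support_eq[OF feasible_assignD(1)[OF feasible]
        feasible_assignD(1)[OF feasible'] support] .
  show ?thesis
    unfolding ra_obj_eq_kmeans_cost_plus_separation_error
    using kmeans_cost_centroids_cong[OF same] separation_error_cong[OF same] by simp
qed

lemma ra_obj_hp_step_eq_if_support_eq:
  fixes x :: "nat \<Rightarrow> real^'d"
  assumes feasible: "feasible_assign N K Nmin Nmax z" and feasible': "feasible_assign N K Nmin Nmax z'"
    and support: "assign_support N K z = assign_support N K z'"
    and hp: "hp_step x N K M \<beta> \<epsilon> z xip xim" and hp': "hp_step x N K M \<beta> \<epsilon> z' xip' xim'"
  shows "ra_obj x N K lam z (centroids x N z) xip xim = ra_obj x N K lam z' (centroids x N z') xip' xim'"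
proof -
  have same: "\<forall>t<N. \<forall>k<K. z t k = z' t k"
    using binary_assign_eq_if_support_eq[OF feasible_assignD(1)[OF feasible]
        feasible_assignD(1)[OF feasible'] support] .
  have "separation_error N K z xip xim \<le> separation_error N K z' xip' xim'"
    using hp_step_separation_error_le[OF feasible hp hp'] unfolding separation_error_cong[OF same] .
  moreover have "separation_error N K z' xip' xim' \<le> separation_error N K z xip xim"
    using hp_step_separation_error_le[OF feasible' hp' hp] unfolding separation_error_cong[OF same] .
  ultimately have "separation_error N K z xip xim = separation_error N K z' xip' xim'"
    by (rule antisym)
  then show ?thesis
    unfolding ra_obj_eq_kmeans_cost_plus_separation_error kmeans_cost_centroids_cong[OF same] by simp
qed

lemma finite_image_if_factors:
  assumes "finite (h ` A)" and "\<And>a b. a \<in> A \<Longrightarrow> b \<in> A \<Longrightarrow> h a = h b \<Longrightarrow> f a = f b"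
  shows "finite (f ` A)"
proof (rule finite_surj[OF assms(1)])
  show "f ` A \<subseteq> (\<lambda>v. f (inv_into A h v)) ` h ` A"
  proof
    fix v
    assume "v \<in> f ` A"
    then obtain a where "a \<in> A" "v = f a" by blast
    moreover have "inv_into A h (h a) \<in> A" "h (inv_into A h (h a)) = h a"
      using \<open>a \<in> A\<close> by (simp_all add: inv_into_into f_inv_into_f)
    ultimately have "v = f (inv_into A h (h a))"
      using assms(2)[of "inv_into A h (h a)" a] by simp
    then show "v \<in> (\<lambda>v. f (inv_into A h v)) ` h ` A"
      using \<open>a \<in> A\<close> by blast
  qed
qed

lemma antimono_finite_image_eventually_const:
  fixes f :: "nat \<Rightarrow> 'a::linorder"
  assumes "finite (f ` {n..})" and "\<And>m. n \<le> m \<Longrightarrow> f (Suc m) \<le> f m"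
  shows "\<exists>m\<ge>n. \<forall>k\<ge>m. f k = f m"
proof -
  have "Min (f ` {n..}) \<in> f ` {n..}"
    using assms(1) by (rule Min_in) simp
  then obtain m where min: "Min (f ` {n..}) = f m" and "m \<ge> n"
    by auto
  have "f k = f m" if "k \<ge> m" for k
  proof (rule antisym)
    show "f k \<le> f m"
      by (rule lift_Suc_antimono_le_ivl[of "{n..}"]) (use assms(2) that \<open>m \<ge> n\<close> in auto)
    show "f m \<le> f k"
      unfolding min[symmetric] using assms(1) that \<open>m \<ge> n\<close> by (intro Min_le) auto
  qed
  with \<open>m \<ge> n\<close> show ?thesis by blast
qed

lemma outer_run_upto_iteration:
  assumes "outer_run_upto x N K Nmin Nmax M \<beta> \<epsilon> lam L Z C XP XM" and "1 \<le> l" "l \<le> L"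
  shows "inner_loop x N K Nmin Nmax lam (XP (l - 1)) (XM (l - 1)) (Z (l - 1)) (C (l - 1)) (Z l) (C l)"
    and "hp_step x N K M \<beta> \<epsilon> (Z l) (XP l) (XM l)"
  using assms unfolding outer_run_upto_def by simp_all

lemma outer_run_upto_assign:
  assumes "outer_run_upto x N K Nmin Nmax M \<beta> \<epsilon> lam L Z C XP XM" and "1 \<le> l" "l \<le> L"
  shows "feasible_assign N K Nmin Nmax (Z l)" and "C l = centroids x N (Z l)"
  using inner_loop_result[OF outer_run_upto_iteration(1)[OF assms]] by simp_all

lemma outer_obj_Suc_le_ra_obj:
  assumes run: "outer_run_upto x N K Nmin Nmax M \<beta> \<epsilon> lam L Z C XP XM" and "1 \<le> l" "l < L"
  shows "outer_obj x N K lam Z C XP XM (Suc l) \<le> ra_obj x N K lam (Z l) (C l) (XP l) (XM l)"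
proof -
  have "inner_loop x N K Nmin Nmax lam (XP l) (XM l) (Z l) (C l) (Z (Suc l)) (C (Suc l))"
    using outer_run_upto_iteration(1)[OF run, of "Suc l"] \<open>l < L\<close> by simp
  from inner_loop_ra_obj_le[OF outer_run_upto_assign(1)[OF run \<open>1 \<le> l\<close>] this] \<open>l < L\<close>
  show ?thesis
    unfolding outer_obj_def by simp
qed

text \<open>For l = 1 the previous errors are the initial zeros rather than errors of
  hyperplanes, which is why monotonicity only starts at l = 2.\<close>

lemma ra_obj_le_outer_obj:
  assumes run: "outer_run_upto x N K Nmin Nmax M \<beta> \<epsilon> lam L Z C XP XM"
    and "lam \<ge> 0" "2 \<le> l" "l \<le> L"
  shows "ra_obj x N K lam (Z l) (C l) (XP l) (XM l) \<le> outer_obj x N K lam Z C XP XM l"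
proof -
  have "separation_error N K (Z l) (XP l) (XM l) \<le> separation_error N K (Z l) (XP (l - 1)) (XM (l - 1))"
  proof (rule hp_step_separation_error_le)
    show "feasible_assign N K Nmin Nmax (Z l)" "hp_step x N K M \<beta> \<epsilon> (Z l) (XP l) (XM l)"
      using outer_run_upto_assign(1)[OF run] outer_run_upto_iteration(2)[OF run] assms(3,4) by simp_all
    show "hp_step x N K M \<beta> \<epsilon> (Z (l - 1)) (XP (l - 1)) (XM (l - 1))"
      using outer_run_upto_iteration(2)[OF run, of "l - 1"] assms(3,4) by simp
  qed
  then show ?thesis
    unfolding outer_obj_def ra_obj_eq_kmeans_cost_plus_separation_error
    using \<open>lam \<ge> 0\<close> by (simp add: mult_left_mono)
qed

lemma outer_obj_antimono:
  assumes run: "outer_run_upto x N K Nmin Nmax M \<beta> \<epsilon> lam L Z C XP XM"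
    and "lam \<ge> 0" "2 \<le> l" "l < L"
  shows "outer_obj x N K lam Z C XP XM (Suc l) \<le> outer_obj x N K lam Z C XP XM l"
proof -
  have "outer_obj x N K lam Z C XP XM (Suc l) \<le> ra_obj x N K lam (Z l) (C l) (XP l) (XM l)"
    using outer_obj_Suc_le_ra_obj[OF run] assms(3,4) by simp
  also have "\<dots> \<le> outer_obj x N K lam Z C XP XM l"
    using ra_obj_le_outer_obj[OF run \<open>lam \<ge> 0\<close>] assms(3,4) by simp
  finally show ?thesis .
qed

lemma inner_iteration_stabilizes:
  assumes steps: "\<And>m. inner_step x N K Nmin Nmax lam xip xim (zs m) (cs m) (zs (Suc m)) (cs (Suc m))"
  shows "\<exists>m. ra_obj x N K lam (zs (Suc m)) (cs (Suc m)) xip xim = ra_obj x N K lam (zs m) (cs m) xip xim"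
proof -
  define f where "f m = ra_obj x N K lam (zs m) (cs m) xip xim" for m
  have feasible: "feasible_assign N K Nmin Nmax (zs m)" and centres: "cs m = centroids x N (zs m)"
    if "1 \<le> m" for m
    using steps[of "m - 1"] that unfolding inner_step_def by simp_all
  have finite: "finite (f ` {1..})"
  proof (rule finite_image_if_factors)
    show "finite ((\<lambda>m. assign_support N K (zs m)) ` {1..})"
      using finite_image_assign_support[of N K "zs ` {1..}"] by (simp add: image_image)
    show "f a = f b" if "a \<in> {1..}" "b \<in> {1..}"
      and "assign_support N K (zs a) = assign_support N K (zs b)" for a b
      using that ra_obj_centroids_eq_if_support_eq[OF feasible feasible] centres
      unfolding f_def by simp
  qed
  have antimono: "f (Suc m) \<le> f m" if "1 \<le> m" for m
    unfolding f_def using inner_step_ra_obj_le[OF feasible[OF that] steps] .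
  from finite antimono have "\<exists>m\<ge>1. \<forall>k\<ge>m. f k = f m"
    by (rule antimono_finite_image_eventually_const)
  then obtain m where "\<forall>k\<ge>m. f k = f m"
    by blast
  then have "f (Suc m) = f m"
    using le_SucI by blast
  then show ?thesis
    unfolding f_def by blast
qed

lemma outer_iteration_stabilizes:
  assumes run: "\<And>L. outer_run_upto x N K Nmin Nmax M \<beta> \<epsilon> lam L Z C XP XM" and "lam \<ge> 0"
  shows "\<exists>l\<ge>1. outer_obj x N K lam Z C XP XM (Suc l) = outer_obj x N K lam Z C XP XM l"
proof -
  define g where "g l = ra_obj x N K lam (Z l) (C l) (XP l) (XM l)" for l
  have feasible: "feasible_assign N K Nmin Nmax (Z l)" and centres: "C l = centroids x N (Z l)"
    and hp: "hp_step x N K M \<beta> \<epsilon> (Z l) (XP l) (XM l)" if "1 \<le> l" for l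
    using outer_run_upto_assign[OF run that order_refl] outer_run_upto_iteration(2)[OF run that order_refl]
    by simp_all
  have upper: "outer_obj x N K lam Z C XP XM (Suc l) \<le> g l" if "1 \<le> l" for l
    unfolding g_def using outer_obj_Suc_le_ra_obj[OF run[of "Suc l"] that] by simp
  have lower: "g l \<le> outer_obj x N K lam Z C XP XM l" if "2 \<le> l" for l
    unfolding g_def using ra_obj_le_outer_obj[OF run[of l] \<open>lam \<ge> 0\<close> that] by simp
  have finite: "finite (g ` {2..})"
  proof (rule finite_image_if_factors)
    show "finite ((\<lambda>l. assign_support N K (Z l)) ` {2..})"
      using finite_image_assign_support[of N K "Z ` {2..}"] by (simp add: image_image)
    show "g a = g b" if "a \<in> {2..}" "b \<in> {2..}"
      and "assign_support N K (Z a) = assign_support N K (Z b)" for a b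
    proof -
      have a: "1 \<le> a" and b: "1 \<le> b"
        using that(1,2) by simp_all
      show ?thesis
        unfolding g_def centres[OF a] centres[OF b]
        by (rule ra_obj_hp_step_eq_if_support_eq[OF feasible[OF a] feasible[OF b] that(3) hp[OF a] hp[OF b]])
    qed
  qed
  have antimono: "g (Suc l) \<le> g l" if "2 \<le> l" for l
    using lower[of "Suc l"] upper[of l] that by simp
  from finite antimono have "\<exists>m\<ge>2. \<forall>k\<ge>m. g k = g m"
    by (rule antimono_finite_image_eventually_const)
  then obtain m where "m \<ge> 2" and const: "\<forall>k\<ge>m. g k = g m"
    by blast
  have "g (Suc m) = g m" "g (Suc (Suc m)) = g m"
    using const[rule_format, of "Suc m"] const[rule_format, of "Suc (Suc m)"] by simp_all
  moreover have "g (Suc m) \<le> outer_obj x N K lam Z C XP XM (Suc m)"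
    "outer_obj x N K lam Z C XP XM (Suc m) \<le> g m"
    "g (Suc (Suc m)) \<le> outer_obj x N K lam Z C XP XM (Suc (Suc m))"
    "outer_obj x N K lam Z C XP XM (Suc (Suc m)) \<le> g (Suc m)"
    using lower upper \<open>m \<ge> 2\<close> by simp_all
  ultimately have "outer_obj x N K lam Z C XP XM (Suc (Suc m)) = outer_obj x N K lam Z C XP XM (Suc m)"
    by linarith
  then show ?thesis
    by (intro exI[of _ "Suc m"]) simp
qed

theorem theorem2:
  fixes x :: "nat \<Rightarrow> real^'d"
    and N K Nmin Nmax M \<beta> :: nat
    and \<epsilon> lam :: real
  assumes "M > 1" and "\<epsilon> > 0" and "lam \<ge> 0"
  shows
    \<comment> \<open>monotonicity of the objective values over outer iterations l \<ge> 2\<close>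
    "(\<forall>L Z C XP XM. outer_run_upto x N K Nmin Nmax M \<beta> \<epsilon> lam L Z C XP XM \<longrightarrow>
        (\<forall>l. 2 \<le> l \<and> l < L \<longrightarrow>
           outer_obj x N K lam Z C XP XM (Suc l) \<le> outer_obj x N K lam Z C XP XM l))
     \<and>
     \<comment> \<open>every inner loop (a) reaches convergence after finitely many steps\<close>
     (\<forall>xip xim zs cs.
        (\<forall>m. inner_step x N K Nmin Nmax lam xip xim (zs m) (cs m) (zs (Suc m)) (cs (Suc m))) \<longrightarrow>
        (\<exists>m. ra_obj x N K lam (zs (Suc m)) (cs (Suc m)) xip xim = ra_obj x N K lam (zs m) (cs m) xip xim))
     \<and>
     \<comment> \<open>the outer loop stops after finitely many iterations: no run goes on forever
         without the objective value repeating\<close>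
     (\<forall>Z C XP XM. (\<forall>L. outer_run_upto x N K Nmin Nmax M \<beta> \<epsilon> lam L Z C XP XM) \<longrightarrow>
        (\<exists>l\<ge>1. outer_obj x N K lam Z C XP XM (Suc l) = outer_obj x N K lam Z C XP XM l))"
proof (intro conjI allI impI)
  fix L Z C XP XM l
  assume run: "outer_run_upto x N K Nmin Nmax M \<beta> \<epsilon> lam L Z C XP XM" and l: "2 \<le> l \<and> l < L"
  show "outer_obj x N K lam Z C XP XM (Suc l) \<le> outer_obj x N K lam Z C XP XM l"
    using outer_obj_antimono[OF run \<open>lam \<ge> 0\<close>] l by simp
next
  fix xip xim zs cs
  assume steps: "\<forall>m. inner_step x N K Nmin Nmax lam xip xim (zs m) (cs m) (zs (Suc m)) (cs (Suc m))"
  show "\<exists>m. ra_obj x N K lam (zs (Suc m)) (cs (Suc m)) xip xim = ra_obj x N K lam (zs m) (cs m) xip xim"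
    by (rule inner_iteration_stabilizes[where Nmin = Nmin and Nmax = Nmax]) (use steps in simp)
next
  fix Z C XP XM
  assume run: "\<forall>L. outer_run_upto x N K Nmin Nmax M \<beta> \<epsilon> lam L Z C XP XM"
  show "\<exists>l\<ge>1. outer_obj x N K lam Z C XP XM (Suc l) = outer_obj x N K lam Z C XP XM l"
    by (rule outer_iteration_stabilizes[where Nmin = Nmin and Nmax = Nmax and M = M and \<beta> = \<beta>
        and \<epsilon> = \<epsilon>]) (use run \<open>lam \<ge> 0\<close> in simp_all)
qed

end
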